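(* Let $p\in(0,1]$, $c\ge0$, $\beta<1$, $\delta\in(0,1)$ with $c<\frac12p+\frac12(\beta-1)p^2$, and let $R=\frac12$, $T=p+(1-p)\frac12-c$, $S=(1-p)\frac12$, $Q=p^2\frac12\beta+p(1-p)+(1-p)^2\frac12-c$. For an integer $k\ge1$ let \[V_k=T+\sum_{i=1}^{k-1}\delta^iQ+\delta^kS+\frac{\delta^{k+1}}{1-\delta}R\] be Player 1's payoff when Player 1 defects in rounds $1,\dots,k$ and cooperates afterwards, while Player 2 cooperates in round 1, defects in rounds $2,\dots,k+1$ and cooperates afterwards. Then: (i) if $\delta\ge\frac{Q-S}{R-S}=p\beta+(1-p)-\frac{2c}{p}$, then $V_1\ge V_k$ for all $k\ge1$ (defecting for only one round is optimal among these plans); (ii) if $\delta<\frac{Q-S}{R-S}=p\beta+(1-p)-\frac{2c}{p}$, then $V_{k+1}>V_k$ for every $k\ge1$, so it is optimal for Player 1 to defect indefinitely ($k\to\infty$).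
   Context: Model: two content providers in an infinitely repeated game choose each period to cooperate ($C$) or attack/defect ($D$). $p$: attack success probability; $c$: cost per attack; $\beta<1$: market degradation factor; $\delta$: discount factor. Stage payoffs: mutual cooperation $R$ each; a lone attacker $T$, the cooperator facing an attack $S$; mutual attack $Q$ each. The setting models Tit-for-Tat retaliation against $k$ consecutive defections. The condition on $c$ is the standing Prisoners' Dilemma assumption $T>R>Q>S$. *)

theory Defs
  imports Complex_Main
begin

definition payR :: real where "payR = 1/2"
definition payT :: "real \<Rightarrow> real \<Rightarrow> real" where "payT p c = p + (1 - p) * (1/2) - c"
definition payS :: "real \<Rightarrow> real" where "payS p = (1 - p) * (1/2)"
definition payQ :: "real \<Rightarrow> real \<Rightarrow> real \<Rightarrow> real" where
  "payQ p c \<beta> = p^2 * (1/2) * \<beta> + p * (1 - p) + (1 - p)^2 * (1/2) - c"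

definition Vk :: "real \<Rightarrow> real \<Rightarrow> real \<Rightarrow> real \<Rightarrow> nat \<Rightarrow> real" where
  "Vk p c \<beta> \<delta> k = payT p c + (\<Sum>i\<in>{1..<k}. \<delta>^i * payQ p c \<beta>) + \<delta>^k * payS p
     + \<delta>^(k+1) / (1 - \<delta>) * payR"

end

theory Submission
  imports Defs
begin

text \<open>Passing from \<open>V\<^sub>k\<close> to \<open>V\<^sub>k\<^sub>+\<^sub>1\<close> turns the payoff \<open>S\<close> at discount \<open>\<delta>\<^sup>k\<close> into \<open>Q\<close> and the
  payoff \<open>R\<close> at discount \<open>\<delta>\<^sup>k\<^sup>+\<^sup>1\<close> into \<open>S\<close>, so
  \<open>V\<^sub>k\<^sub>+\<^sub>1 - V\<^sub>k = \<delta>\<^sup>k ((Q - S) - \<delta> (R - S))\<close>. Its sign does not depend on \<open>k\<close>: the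
  \<open>V\<^sub>k\<close> are non-increasing in \<open>k\<close> when \<open>\<delta> \<ge> (Q - S)/(R - S)\<close> and strictly increasing
  otherwise. Only \<open>p > 0\<close> (so that \<open>R > S\<close>) and \<open>0 < \<delta> < 1\<close> are needed.\<close>

lemma Vk_Suc_diff:
  assumes "k \<ge> 1" "\<delta> \<noteq> 1"
  shows "Vk p c \<beta> \<delta> (Suc k) - Vk p c \<beta> \<delta> k
     = \<delta>^k * ((payQ p c \<beta> - payS p) - \<delta> * (payR - payS p))"
proof -
  have sum_Suc: "(\<Sum>i\<in>{1..<Suc k}. \<delta>^i * payQ p c \<beta>)
      = (\<Sum>i\<in>{1..<k}. \<delta>^i * payQ p c \<beta>) + \<delta>^k * payQ p c \<beta>"
    using assms(1) by simp
  have tail_Suc: "\<delta>^(Suc k + 1) / (1 - \<delta>) - \<delta>^(k + 1) / (1 - \<delta>) = -(\<delta>^(k + 1))"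
    using assms(2) by (simp add: diff_divide_distrib[symmetric] field_simps)
  have "Vk p c \<beta> \<delta> (Suc k) - Vk p c \<beta> \<delta> k
      = \<delta>^k * payQ p c \<beta> + (\<delta>^(Suc k) - \<delta>^k) * payS p
        + (\<delta>^(Suc k + 1) / (1 - \<delta>) - \<delta>^(k + 1) / (1 - \<delta>)) * payR"
    unfolding Vk_def sum_Suc by (simp add: algebra_simps)
  then show ?thesis
    unfolding tail_Suc by (simp add: algebra_simps)
qed

lemma payR_minus_payS: "payR - payS p = p / 2"
  unfolding payR_def payS_def by (simp add: field_simps)

lemma payoff_threshold_eq:
  assumes "p \<noteq> 0"
  shows "(payQ p c \<beta> - payS p) / (payR - payS p) = p * \<beta> + (1 - p) - 2 * c / p"
  using assms unfolding payR_minus_payS unfolding payQ_def payS_def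
  by (simp add: field_simps power2_eq_square)

lemma Vk_Suc_le:
  assumes "k \<ge> 1" "0 < \<delta>" "\<delta> < 1" "payQ p c \<beta> - payS p \<le> \<delta> * (payR - payS p)"
  shows "Vk p c \<beta> \<delta> (Suc k) \<le> Vk p c \<beta> \<delta> k"
proof -
  have "\<delta>^k * ((payQ p c \<beta> - payS p) - \<delta> * (payR - payS p)) \<le> 0"
    using assms(2,4) by (simp add: mult_nonneg_nonpos)
  with Vk_Suc_diff[OF assms(1) less_imp_neq[OF assms(3)], of p c \<beta>] show ?thesis
    by linarith
qed

lemma Vk_le_Vk_1:
  assumes "k \<ge> 1" "0 < \<delta>" "\<delta> < 1" "payQ p c \<beta> - payS p \<le> \<delta> * (payR - payS p)"
  shows "Vk p c \<beta> \<delta> k \<le> Vk p c \<beta> \<delta> 1"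
  using assms(1)
proof (induction k rule: dec_induct)
  case base
  then show ?case by simp
next
  case (step n)
  then show ?case
    using Vk_Suc_le[of n, OF _ assms(2-4)] by simp
qed

lemma Vk_Suc_gt:
  assumes "k \<ge> 1" "0 < \<delta>" "\<delta> < 1" "\<delta> * (payR - payS p) < payQ p c \<beta> - payS p"
  shows "Vk p c \<beta> \<delta> k < Vk p c \<beta> \<delta> (Suc k)"
proof -
  have "0 < \<delta>^k * ((payQ p c \<beta> - payS p) - \<delta> * (payR - payS p))"
    using assms(2,4) by simp
  with Vk_Suc_diff[OF assms(1) less_imp_neq[OF assms(3)], of p c \<beta>] show ?thesis
    by linarith
qed

theorem theorem5:
  fixes p c \<beta> \<delta> :: real
  assumes "0 < p" "p \<le> 1" "0 \<le> c" "\<beta> < 1" "0 < \<delta>" "\<delta> < 1"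
    and "c < 1/2 * p + 1/2 * (\<beta> - 1) * p^2"
  shows "(payQ p c \<beta> - payS p) / (payR - payS p) = p * \<beta> + (1 - p) - 2 * c / p
    \<and> (\<delta> \<ge> (payQ p c \<beta> - payS p) / (payR - payS p) \<longrightarrow>
         (\<forall>k::nat. k \<ge> 1 \<longrightarrow> Vk p c \<beta> \<delta> 1 \<ge> Vk p c \<beta> \<delta> k))
    \<and> (\<delta> < (payQ p c \<beta> - payS p) / (payR - payS p) \<longrightarrow>
         (\<forall>k::nat. k \<ge> 1 \<longrightarrow> Vk p c \<beta> \<delta> (k+1) > Vk p c \<beta> \<delta> k))"
proof -
  have RS_pos: "payR - payS p > 0"
    using assms(1) by (simp add: payR_minus_payS)
  have one_round: "\<delta> \<ge> (payQ p c \<beta> - payS p) / (payR - payS p) \<longrightarrow>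
      (\<forall>k::nat. k \<ge> 1 \<longrightarrow> Vk p c \<beta> \<delta> 1 \<ge> Vk p c \<beta> \<delta> k)"
    using Vk_le_Vk_1[OF _ assms(5,6)] RS_pos by (simp add: pos_divide_le_eq)
  have forever: "\<delta> < (payQ p c \<beta> - payS p) / (payR - payS p) \<longrightarrow>
      (\<forall>k::nat. k \<ge> 1 \<longrightarrow> Vk p c \<beta> \<delta> (k+1) > Vk p c \<beta> \<delta> k)"
    using Vk_Suc_gt[OF _ assms(5,6)] RS_pos by (simp add: pos_less_divide_eq)
  show ?thesis
    using payoff_threshold_eq[of p c \<beta>] assms(1) one_round forever by simp
qed

end
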